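(* Let $F$ be a finite field of characteristic $3$. Let $k\ge 0$ be an integer, $m=3k+1$, and $t$ an integer with $t^3\equiv 1\pmod m$ and $\gcd(m,t-1)=1$. Let $G=T_{3m}=\langle x,y\mid x^m=y^3=1,\ y^{-1}xy=x^t\rangle$ (of order $3m$), $FG$ its group algebra, and $H=\langle x\rangle$. Then $\dim_F Z(\Delta(G,H))=k$.
   Context: $\Delta(G,H)$ is the ideal of $FG$ generated by $\{h-1\mid h\in H\}$; $Z(R)$ denotes the center of a ring $R$. *)

theory Defs
  imports Complex_Main "HOL-Library.Function_Algebras" "HOL-Algebra.Generated_Groups"
begin

text \<open>Group algebra FG of a finite group G (HOL-Algebra) over a field of type 'f:
  elements are functions carrier G to 'f, extended by 0 outside the carrier.\<close>

definition group_alg :: "('g, 'b) monoid_scheme \<Rightarrow> ('g \<Rightarrow> 'f::field) set" where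
  "group_alg G = {f. \<forall>g. g \<notin> carrier G \<longrightarrow> f g = 0}"

definition ga_mult :: "('g, 'b) monoid_scheme \<Rightarrow> ('g \<Rightarrow> 'f::field) \<Rightarrow> ('g \<Rightarrow> 'f) \<Rightarrow> ('g \<Rightarrow> 'f)" where
  "ga_mult G f h = (\<lambda>g. if g \<in> carrier G
      then (\<Sum>a\<in>carrier G. f a * h (inv\<^bsub>G\<^esub> a \<otimes>\<^bsub>G\<^esub> g)) else 0)"

definition ga_basis :: "'g \<Rightarrow> ('g \<Rightarrow> 'f::field)" where
  "ga_basis g = (\<lambda>a. if a = g then 1 else 0)"

definition ga_ideal :: "('g, 'b) monoid_scheme \<Rightarrow> ('g \<Rightarrow> 'f::field) set \<Rightarrow> bool" where
  "ga_ideal G I \<longleftrightarrow> I \<subseteq> group_alg G \<and> (\<lambda>_. 0) \<in> I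
     \<and> (\<forall>a\<in>I. \<forall>b\<in>I. (\<lambda>g. a g + b g) \<in> I)
     \<and> (\<forall>a\<in>I. \<forall>r\<in>group_alg G. ga_mult G r a \<in> I \<and> ga_mult G a r \<in> I)"

definition Delta :: "('g, 'b) monoid_scheme \<Rightarrow> 'g set \<Rightarrow> ('g \<Rightarrow> 'f::field) set" where
  "Delta G H = \<Inter>{I. ga_ideal G I \<and> {(\<lambda>g. ga_basis h g - ga_basis \<one>\<^bsub>G\<^esub> g) | h. h \<in> H} \<subseteq> I}"

definition ga_center :: "('g, 'b) monoid_scheme \<Rightarrow> ('g \<Rightarrow> 'f::field) set \<Rightarrow> ('g \<Rightarrow> 'f) set" where
  "ga_center G R = {z\<in>R. \<forall>r\<in>R. ga_mult G z r = ga_mult G r z}"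

definition fdim :: "('g \<Rightarrow> 'f::field) set \<Rightarrow> nat" where
  "fdim S = vector_space.dim (\<lambda>(c::'f) f. (\<lambda>x. c * f x)) S"

end

(* H = <x> is a normal subgroup of order m, and m = 1 in F. Write H^ for the sum of the elements
   of H. The generators h - 1 of Delta(G,H) are annihilated by H^ from the right, hence so is all
   of Delta(G,H); and e = 1 - H^, whose coefficient sum on H is 1 - m = 0, is a central element of
   Delta(G,H) with z e = z for every z in Delta(G,H). So if z in Delta(G,H) commutes with
   Delta(G,H), then z r = z (r e) = (r e) z = r z for every r in FG: the centre of Delta(G,H)
   consists of the class functions in Delta(G,H).
   Let z be such a class function. Every coset aH other than H lies in the conjugacy class of a,
   so 0 = (z H^)(a) = m z(a) = z(a). On H - {1} conjugation acts through h |-> y^-1 h y, a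
   fixed-point-free permutation of order 3, and z is constant on its orbits; hence the
   coefficient sum (z H^)(1) = 0 of z on H equals z(1), and z is a combination of the indicators
   of the orbits. Conversely each such indicator is a class function with coefficient sum 3 = 0,
   so it lies in Delta(G,H), and these (m - 1) / 3 = k indicators form a basis. *)

theory Submission
  imports Defs "HOL-Library.Indicator_Function" "HOL-Algebra.Multiplicative_Group"
begin

section \<open>Orbits of a fixed-point-free map of order three\<close>

locale fixpoint_free_order3 =
  fixes P :: "'a set" and s :: "'a \<Rightarrow> 'a"
  assumes finite_P: "finite P"
    and maps_to: "p \<in> P \<Longrightarrow> s p \<in> P"
    and cube: "p \<in> P \<Longrightarrow> s (s (s p)) = p"
    and no_fixpoint: "p \<in> P \<Longrightarrow> s p \<noteq> p"
begin

definition orbit :: "'a \<Rightarrow> 'a set" where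
  "orbit p = {p, s p, s (s p)}"

abbreviation orbits :: "'a set set" where
  "orbits \<equiv> orbit ` P"

lemma orbit_subset: "p \<in> P \<Longrightarrow> orbit p \<subseteq> P"
  using maps_to by (auto simp: orbit_def)

lemma mem_orbit_self: "p \<in> orbit p"
  by (simp add: orbit_def)

lemma finite_orbit: "finite (orbit p)"
  by (simp add: orbit_def)

lemma card_orbit:
  assumes p: "p \<in> P"
  shows "card (orbit p) = 3"
proof -
  have "s p \<noteq> p" "s (s p) \<noteq> s p" using no_fixpoint maps_to p by auto
  moreover have "s (s p) \<noteq> p" using no_fixpoint[OF p] cube[OF p] by metis
  ultimately show ?thesis by (simp add: orbit_def)
qed

lemma orbit_eq:
  assumes p: "p \<in> P" and q: "q \<in> orbit p"
  shows "orbit q = orbit p"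
proof -
  have "orbit (s p) = orbit p" "orbit (s (s p)) = orbit p"
    unfolding orbit_def cube[OF p] by auto
  with q show ?thesis by (auto simp: orbit_def)
qed

lemma disjoint_orbits: "disjoint orbits"
  by (rule disjointI) (use orbit_eq in blast)

lemma Union_orbits: "\<Union> orbits = P"
  using orbit_subset mem_orbit_self by blast

lemma card_P_eq: "card P = 3 * card orbits"
proof -
  have "3 * card orbits = card (\<Union> orbits)"
    by (rule card_partition)
      (use finite_P disjoint_orbits card_orbit in \<open>auto simp: Union_orbits disjoint_def\<close>)
  thus ?thesis by (simp add: Union_orbits)
qed

lemma invariant_const_on_orbit:
  assumes "\<And>p. p \<in> P \<Longrightarrow> f (s p) = f p" "p \<in> P" "q \<in> orbit p"
  shows "f q = f p"
  using assms maps_to unfolding orbit_def by auto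

lemma sum_invariant_eq_0:
  fixes f :: "'a \<Rightarrow> 'b::comm_ring_1"
  assumes three: "(3::'b) = 0" and inv: "\<And>p. p \<in> P \<Longrightarrow> f (s p) = f p"
  shows "sum f P = 0"
proof -
  have "sum f P = sum f (\<Union> orbits)"
    by (simp add: Union_orbits)
  also have "\<dots> = (\<Sum>Q\<in>orbits. sum f Q)"
    by (rule sum.Union_disjoint_sets[unfolded comp_def]) (auto simp: finite_orbit disjoint_orbits)
  also have "\<dots> = 0"
  proof (rule sum.neutral, rule ballI)
    fix Q assume "Q \<in> orbits"
    then obtain p where p: "p \<in> P" and Q: "Q = orbit p" by blast
    have "sum f Q = (\<Sum>q\<in>Q. f p)"
      using invariant_const_on_orbit[where f = f, OF inv p] Q by (intro sum.cong) auto
    also have "\<dots> = 3 * f p" using card_orbit[OF p] Q by simp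
    finally show "sum f Q = 0" using three by simp
  qed
  finally show ?thesis .
qed

end

section \<open>Indicator functions in the space of field-valued functions\<close>

interpretation fun_vs: vector_space "\<lambda>(c::'f::field) (f::'a \<Rightarrow> 'f) x. c * f x"
  by unfold_locales (auto simp: fun_eq_iff algebra_simps)

lemma sum_fun_apply: "sum F A a = (\<Sum>x\<in>A. F x a)"
  by (induction A rule: infinite_finite_induct) auto

lemma in_span_indicators:
  fixes f :: "'a \<Rightarrow> 'f::field"
  assumes fin: "finite \<Q>" and disj: "disjoint \<Q>"
    and supp: "\<And>a. a \<notin> \<Union>\<Q> \<Longrightarrow> f a = 0"
    and const: "\<And>Q a b. Q \<in> \<Q> \<Longrightarrow> a \<in> Q \<Longrightarrow> b \<in> Q \<Longrightarrow> f a = f b"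
  shows "f \<in> fun_vs.span (indicator ` \<Q>)"
proof -
  define c where "c Q = f (SOME q. q \<in> Q)" for Q
  have "f a = (\<Sum>Q\<in>\<Q>. c Q * indicator Q a)" for a
  proof (cases "a \<in> \<Union>\<Q>")
    case True
    then obtain Q where Q: "Q \<in> \<Q>" "a \<in> Q" by blast
    have unique: "Q' = Q" if "Q' \<in> \<Q>" "a \<in> Q'" for Q'
      using disj Q that by (auto simp: disjoint_def)
    have "c Q' * indicator Q' a = (if Q' = Q then c Q else 0)" if "Q' \<in> \<Q>" for Q'
      using unique[OF that] Q(2) by (cases "a \<in> Q'") auto
    hence "(\<Sum>Q'\<in>\<Q>. c Q' * indicator Q' a) = (\<Sum>Q'\<in>\<Q>. if Q' = Q then c Q else 0)"
      by (rule sum.cong[OF refl])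
    also have "\<dots> = c Q" using Q fin by simp
    also have "\<dots> = f a"
      unfolding c_def using const[OF Q(1) _ Q(2)] someI[of "\<lambda>q. q \<in> Q", OF Q(2)] by blast
    finally show ?thesis by simp
  next
    case False
    hence "indicator Q a = (0::'f)" if "Q \<in> \<Q>" for Q using that by auto
    thus ?thesis using False supp by simp
  qed
  hence "f = (\<Sum>Q\<in>\<Q>. (\<lambda>x. c Q * indicator Q x))"
    by (simp add: fun_eq_iff sum_fun_apply)
  also have "\<dots> \<in> fun_vs.span (indicator ` \<Q>)"
    by (intro fun_vs.span_sum fun_vs.span_scale fun_vs.span_base) auto
  finally show ?thesis .
qed

lemma independent_indicators:
  assumes fin: "finite \<Q>" and disj: "disjoint \<Q>" and nonempty: "{} \<notin> \<Q>"
  shows "fun_vs.independent (indicator ` \<Q> :: ('a \<Rightarrow> 'f::field) set)"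
proof (rule fun_vs.independent_if_scalars_zero)
  show "finite (indicator ` \<Q> :: ('a \<Rightarrow> 'f) set)" using fin by simp
  fix c :: "('a \<Rightarrow> 'f) \<Rightarrow> 'f" and v :: "'a \<Rightarrow> 'f"
  assume zero: "(\<Sum>w\<in>indicator ` \<Q>. (\<lambda>x. c w * w x)) = 0" and v: "v \<in> indicator ` \<Q>"
  then obtain Q where Q: "Q \<in> \<Q>" and vQ: "v = indicator Q" by blast
  moreover have "Q \<noteq> {}" using Q nonempty by blast
  ultimately obtain a where a: "a \<in> Q" by blast
  have "c w * w a = (if w = v then c w else 0)" if w: "w \<in> indicator ` \<Q>" for w :: "'a \<Rightarrow> 'f"
  proof -
    obtain Q' where Q': "Q' \<in> \<Q>" "w = indicator Q'" using w by blast
    have "a \<in> Q' \<longleftrightarrow> Q' = Q" using disj Q Q' a by (auto simp: disjoint_def)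
    thus ?thesis using Q' vQ a by auto
  qed
  hence "(\<Sum>w\<in>indicator ` \<Q>. c w * w a) = (\<Sum>w\<in>indicator ` \<Q>. if w = v then c w else 0)"
    by (rule sum.cong[OF refl])
  hence "0 = (\<Sum>w\<in>indicator ` \<Q>. if w = v then c w else 0)"
    using fun_cong[OF zero, of a] by (simp add: sum_fun_apply)
  also have "\<dots> = c v" using v fin by simp
  finally show "c v = 0" by simp
qed

lemma inj_indicator: "inj (indicator :: 'a set \<Rightarrow> 'a \<Rightarrow> 'f::zero_neq_one)"
  by (rule injI) (simp add: indicator_def fun_eq_iff set_eq_iff of_bool_eq_iff)

section \<open>The group algebra of a finite group\<close>

lemma (in group) mult_inv_cancel [simp]:
  "x \<in> carrier G \<Longrightarrow> y \<in> carrier G \<Longrightarrow> x \<otimes> (inv x \<otimes> y) = y"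
  by (simp add: m_assoc[symmetric])

lemma (in group) inv_mult_cancel [simp]:
  "x \<in> carrier G \<Longrightarrow> y \<in> carrier G \<Longrightarrow> inv x \<otimes> (x \<otimes> y) = y"
  by (simp add: m_assoc[symmetric])

lemma (in group) conj_eq_one_iff:
  "g \<in> carrier G \<Longrightarrow> a \<in> carrier G \<Longrightarrow> inv g \<otimes> a \<otimes> g = \<one> \<longleftrightarrow> a = \<one>"
  by (metis inv_closed m_closed inv_mult_cancel l_inv r_one m_assoc)

lemma ga_basis_eq_indicator: "ga_basis c = indicator {c}"
  by (simp add: fun_eq_iff ga_basis_def indicator_def)

lemma ga_ideal_sum:
  assumes I: "ga_ideal G I" and "finite A" and "\<And>a. a \<in> A \<Longrightarrow> F a \<in> I"
  shows "sum F A \<in> I"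
  using assms(2,3)
proof (induction A rule: finite_induct)
  case empty
  thus ?case using I by (simp add: ga_ideal_def zero_fun_def)
next
  case (insert a A)
  hence "(\<lambda>g. F a g + sum F A g) \<in> I" using I by (simp add: ga_ideal_def)
  thus ?case using insert by (simp add: plus_fun_def)
qed

locale finite_group = group +
  assumes finite_carrier: "finite (carrier G)"
begin

abbreviation ga_mult_G :: "('a \<Rightarrow> 'f::field) \<Rightarrow> ('a \<Rightarrow> 'f) \<Rightarrow> 'a \<Rightarrow> 'f" (infixl "\<star>" 70)
  where "f \<star> h \<equiv> ga_mult G f h"

lemma ga_mult_apply: "a \<in> carrier G \<Longrightarrow> (f \<star> h) a = (\<Sum>b\<in>carrier G. f b * h (inv b \<otimes> a))"
  by (simp add: ga_mult_def)

lemma ga_mult_outside: "a \<notin> carrier G \<Longrightarrow> (f \<star> h) a = 0"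
  by (simp add: ga_mult_def)

lemma ga_mult_closed: "f \<star> h \<in> group_alg G"
  by (simp add: group_alg_def ga_mult_outside)

lemma group_alg_outside: "f \<in> group_alg G \<Longrightarrow> a \<notin> carrier G \<Longrightarrow> f a = 0"
  by (simp add: group_alg_def)

lemma ga_basis_in_group_alg: "c \<in> carrier G \<Longrightarrow> ga_basis c \<in> group_alg G"
  by (simp add: group_alg_def ga_basis_def)

lemma ga_mult_apply_right:
  assumes a: "a \<in> carrier G"
  shows "(f \<star> h) a = (\<Sum>c\<in>carrier G. f (a \<otimes> inv c) * h c)"
proof -
  have "(\<Sum>b\<in>carrier G. f b * h (inv b \<otimes> a)) = (\<Sum>c\<in>carrier G. f (a \<otimes> inv c) * h c)"
    using a
    by (intro sum.reindex_bij_witness[where i = "\<lambda>c. a \<otimes> inv c" and j = "\<lambda>b. inv b \<otimes> a"])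
       (auto simp: m_assoc inv_mult_group)
  thus ?thesis using a by (simp add: ga_mult_apply)
qed

lemma ga_mult_assoc: "f \<star> g \<star> h = f \<star> (g \<star> h)"
proof
  fix a
  show "(f \<star> g \<star> h) a = (f \<star> (g \<star> h)) a"
  proof (cases "a \<in> carrier G")
    case a: True
    have inner: "(\<Sum>b\<in>carrier G. g (inv c \<otimes> b) * h (inv b \<otimes> a)) = (g \<star> h) (inv c \<otimes> a)"
      if c: "c \<in> carrier G" for c
      using a c
      by (simp add: ga_mult_apply,
          intro sum.reindex_bij_witness[where i = "\<lambda>d. c \<otimes> d" and j = "\<lambda>b. inv c \<otimes> b"])
         (auto simp: m_assoc inv_mult_group)
    have "(f \<star> g \<star> h) a = (\<Sum>b\<in>carrier G. \<Sum>c\<in>carrier G. f c * g (inv c \<otimes> b) * h (inv b \<otimes> a))"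
      using a by (simp add: ga_mult_apply sum_distrib_right)
    also have "\<dots> = (\<Sum>c\<in>carrier G. f c * (\<Sum>b\<in>carrier G. g (inv c \<otimes> b) * h (inv b \<otimes> a)))"
      by (subst sum.swap) (simp add: sum_distrib_left mult.assoc)
    also have "\<dots> = (f \<star> (g \<star> h)) a"
      using a by (simp add: ga_mult_apply inner)
    finally show ?thesis .
  qed (simp add: ga_mult_outside)
qed

lemma ga_mult_add_left: "(\<lambda>a. f1 a + f2 a) \<star> h = (\<lambda>a. (f1 \<star> h) a + (f2 \<star> h) a)"
  by (simp add: fun_eq_iff ga_mult_def distrib_right sum.distrib)

lemma ga_mult_diff_left: "(\<lambda>a. f1 a - f2 a) \<star> h = (\<lambda>a. (f1 \<star> h) a - (f2 \<star> h) a)"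
  by (simp add: fun_eq_iff ga_mult_def left_diff_distrib sum_subtractf)

lemma ga_mult_diff_right: "f \<star> (\<lambda>a. h1 a - h2 a) = (\<lambda>a. (f \<star> h1) a - (f \<star> h2) a)"
  by (simp add: fun_eq_iff ga_mult_def right_diff_distrib sum_subtractf)

lemma ga_mult_zero_left: "(\<lambda>_. 0) \<star> f = (\<lambda>_. 0)"
  by (simp add: fun_eq_iff ga_mult_def)

lemma ga_mult_zero_right: "f \<star> (\<lambda>_. 0) = (\<lambda>_. 0)"
  by (simp add: fun_eq_iff ga_mult_def)

lemma ga_mult_basis_left:
  assumes c: "c \<in> carrier G"
  shows "ga_basis c \<star> f = (\<lambda>a. if a \<in> carrier G then f (inv c \<otimes> a) else 0)"
proof
  fix a
  show "(ga_basis c \<star> f) a = (if a \<in> carrier G then f (inv c \<otimes> a) else 0)"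
    using c finite_carrier
    by (cases "a \<in> carrier G") (simp_all add: ga_mult_apply ga_mult_outside ga_basis_eq_indicator)
qed

lemma ga_mult_basis_right:
  assumes c: "c \<in> carrier G"
  shows "f \<star> ga_basis c = (\<lambda>a. if a \<in> carrier G then f (a \<otimes> inv c) else 0)"
proof
  fix a
  show "(f \<star> ga_basis c) a = (if a \<in> carrier G then f (a \<otimes> inv c) else 0)"
    using c finite_carrier
    by (cases "a \<in> carrier G") (simp_all add: ga_mult_apply_right ga_mult_outside ga_basis_eq_indicator)
qed

lemma ga_mult_one_left: "f \<in> group_alg G \<Longrightarrow> ga_basis \<one> \<star> f = f"
  by (simp add: fun_eq_iff ga_mult_basis_left group_alg_outside)

lemma ga_mult_one_right: "f \<in> group_alg G \<Longrightarrow> f \<star> ga_basis \<one> = f"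
  by (simp add: fun_eq_iff ga_mult_basis_right group_alg_outside)

lemma ga_mult_scalar_left:
  assumes "f \<in> group_alg G"
  shows "(\<lambda>b. r * ga_basis \<one> b) \<star> f = (\<lambda>a. r * f a)"
proof -
  have "(\<lambda>b. r * ga_basis \<one> b) \<star> f = (\<lambda>a. r * (ga_basis \<one> \<star> f) a)"
    by (simp add: fun_eq_iff ga_mult_def sum_distrib_left mult.assoc)
  thus ?thesis using ga_mult_one_left[OF assms] by simp
qed

definition class_function :: "('a \<Rightarrow> 'f) \<Rightarrow> bool" where
  "class_function f \<longleftrightarrow> (\<forall>g\<in>carrier G. \<forall>a\<in>carrier G. f (inv g \<otimes> a \<otimes> g) = f a)"

lemma class_function_commute:
  assumes f: "class_function f"
  shows "f \<star> r = r \<star> f"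
proof
  fix a
  show "(f \<star> r) a = (r \<star> f) a"
  proof (cases "a \<in> carrier G")
    case a: True
    have conj: "f (a \<otimes> inv c) = f (inv c \<otimes> a)" if c: "c \<in> carrier G" for c
      using f a c unfolding class_function_def
      by (metis inv_closed m_assoc m_closed inv_mult_cancel)
    have "(f \<star> r) a = (\<Sum>c\<in>carrier G. f (a \<otimes> inv c) * r c)"
      by (rule ga_mult_apply_right[OF a])
    also have "\<dots> = (\<Sum>c\<in>carrier G. r c * f (inv c \<otimes> a))"
      by (rule sum.cong[OF refl]) (simp add: conj mult.commute)
    also have "\<dots> = (r \<star> f) a"
      using a by (simp add: ga_mult_apply)
    finally show ?thesis .
  qed (simp add: ga_mult_outside)
qed

lemma class_function_if_commute_basis:
  assumes "\<And>c. c \<in> carrier G \<Longrightarrow> f \<star> ga_basis c = ga_basis c \<star> f"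
  shows "class_function f"
  unfolding class_function_def
proof (intro ballI)
  fix g a assume g: "g \<in> carrier G" and a: "a \<in> carrier G"
  have "(f \<star> ga_basis g) (a \<otimes> g) = (ga_basis g \<star> f) (a \<otimes> g)" using assms[OF g] by simp
  thus "f (inv g \<otimes> a \<otimes> g) = f a"
    using a g by (simp add: ga_mult_basis_left ga_mult_basis_right m_assoc)
qed

section \<open>The ideal \<open>\<Delta>(G,H)\<close> of a normal subgroup\<close>

lemma ga_ideal_group_alg: "ga_ideal G (group_alg G)"
  by (auto simp: ga_ideal_def group_alg_def ga_mult_outside)

lemma Delta_generator: "h \<in> H \<Longrightarrow> (\<lambda>g. ga_basis h g - ga_basis \<one> g) \<in> Delta G H"
  by (auto simp: Delta_def)

lemma ga_ideal_Inter:
  assumes "\<I> \<noteq> {}" and "\<And>I. I \<in> \<I> \<Longrightarrow> ga_ideal G I"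
  shows "ga_ideal G (\<Inter>\<I>)"
  using assms unfolding ga_ideal_def by blast

lemma ga_ideal_Delta:
  assumes "H \<subseteq> carrier G"
  shows "ga_ideal G (Delta G H)"
  unfolding Delta_def
proof (rule ga_ideal_Inter)
  have "{(\<lambda>g. ga_basis h g - ga_basis \<one> g) | h. h \<in> H} \<subseteq> group_alg G"
    using assms by (auto simp: group_alg_def ga_basis_def)
  thus "{I. ga_ideal G I \<and> {(\<lambda>g. ga_basis h g - ga_basis \<one> g) | h. h \<in> H} \<subseteq> I} \<noteq> {}"
    using ga_ideal_group_alg by blast
qed simp

lemma ga_ideal_mult_left:
  "ga_ideal G I \<Longrightarrow> a \<in> I \<Longrightarrow> r \<in> group_alg G \<Longrightarrow> ga_mult G r a \<in> I"
  unfolding ga_ideal_def by blast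

lemma Delta_if_supported:
  fixes f :: "'a \<Rightarrow> 'f::field"
  assumes H: "subgroup H G" and supp: "\<And>a. a \<notin> H \<Longrightarrow> f a = 0" and sum_0: "sum f H = 0"
  shows "f \<in> Delta G H"
proof -
  have HG: "H \<subseteq> carrier G" using H by (rule subgroup.subset)
  have finH: "finite H" using finite_subset[OF HG finite_carrier] .
  define d :: "'a \<Rightarrow> 'a \<Rightarrow> 'f" where "d h = (\<lambda>g. ga_basis h g - ga_basis \<one> g)" for h
  define c :: "'a \<Rightarrow> 'a \<Rightarrow> 'f" where "c h = (\<lambda>g. f h * ga_basis \<one> g)" for h
  have c_mult_d: "c h \<star> d h = (\<lambda>a. f h * d h a)" if "h \<in> H" for h
    unfolding c_def using that HG
    by (intro ga_mult_scalar_left) (auto simp: d_def group_alg_def ga_basis_def)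
  have "f a = (\<Sum>h\<in>H. f h * d h a)" for a
  proof -
    have "(\<Sum>h\<in>H. f h * d h a) = (\<Sum>h\<in>H. f h * ga_basis h a) - (\<Sum>h\<in>H. f h) * ga_basis \<one> a"
      by (simp add: d_def right_diff_distrib sum_subtractf sum_distrib_right)
    also have "(\<Sum>h\<in>H. f h * ga_basis h a) = (\<Sum>h\<in>H. if a = h then f a else 0)"
      by (rule sum.cong) (simp_all add: ga_basis_def)
    also have "\<dots> = f a"
      using finH supp by (simp add: sum.delta)
    finally show ?thesis using sum_0 by simp
  qed
  also have "(\<Sum>h\<in>H. f h * d h a) = (\<Sum>h\<in>H. c h \<star> d h) a" for a
    by (simp add: sum_fun_apply c_mult_d cong: sum.cong)
  finally have "f = (\<Sum>h\<in>H. c h \<star> d h)" ..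
  also have "\<dots> \<in> Delta G H"
    using ga_ideal_Delta[OF HG] Delta_generator[of _ H] finH
    by (intro ga_ideal_sum ga_ideal_mult_left) (auto simp: c_def d_def group_alg_def ga_basis_def)
  finally show ?thesis .
qed

lemma ga_mult_indicator_apply:
  assumes H: "subgroup H G" and a: "a \<in> carrier G"
  shows "(f \<star> indicator H) a = (\<Sum>h\<in>H. f (a \<otimes> h))"
proof -
  have "(f \<star> indicator H) a = (\<Sum>c\<in>H. f (a \<otimes> inv c))"
    using a finite_carrier subgroup.subset[OF H]
    by (simp add: ga_mult_apply_right Int_absorb1)
  also have "\<dots> = (\<Sum>h\<in>H. f (a \<otimes> h))"
    using H by (intro sum.reindex_bij_witness[where i = "\<lambda>h. inv h" and j = "\<lambda>h. inv h"])
      (auto simp: subgroup.m_inv_closed subgroup.mem_carrier)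
  finally show ?thesis .
qed

lemma ga_ideal_annihilator:
  fixes u :: "'a \<Rightarrow> 'f::field"
  assumes u: "class_function u"
  shows "ga_ideal G {f \<in> group_alg G. f \<star> u = (\<lambda>_. 0)}"
  unfolding ga_ideal_def
proof (intro conjI ballI)
  show "(\<lambda>_. 0) \<in> {f \<in> group_alg G. f \<star> u = (\<lambda>_. 0)}"
    by (simp add: group_alg_def ga_mult_zero_left)
  fix f assume "f \<in> {f \<in> group_alg G. f \<star> u = (\<lambda>_. 0)}"
  hence f: "f \<in> group_alg G" and fu: "f \<star> u = (\<lambda>_. 0)" by simp_all
  {
    fix g assume "g \<in> {f \<in> group_alg G. f \<star> u = (\<lambda>_. 0)}"
    thus "(\<lambda>a. f a + g a) \<in> {f \<in> group_alg G. f \<star> u = (\<lambda>_. 0)}"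
      using f fu by (simp add: group_alg_def ga_mult_add_left)
  }
  fix r :: "'a \<Rightarrow> 'f" assume r: "r \<in> group_alg G"
  have "r \<star> f \<star> u = (\<lambda>_. 0)" by (simp add: ga_mult_assoc fu ga_mult_zero_right)
  thus "r \<star> f \<in> {f \<in> group_alg G. f \<star> u = (\<lambda>_. 0)}" by (simp add: ga_mult_closed)
  have "f \<star> r \<star> u = f \<star> u \<star> r"
    by (simp add: ga_mult_assoc class_function_commute[OF u])
  thus "f \<star> r \<in> {f \<in> group_alg G. f \<star> u = (\<lambda>_. 0)}"
    by (simp add: ga_mult_closed fu ga_mult_zero_left)
qed auto

lemma class_function_indicator:
  assumes "H \<lhd> G"
  shows "class_function (indicator H)"
  unfolding class_function_def
proof (intro ballI)
  fix g a assume g: "g \<in> carrier G" and a: "a \<in> carrier G"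
  have "g \<otimes> (inv g \<otimes> a \<otimes> g) \<otimes> inv g = a" using g a by (simp add: m_assoc)
  hence "inv g \<otimes> a \<otimes> g \<in> H \<longleftrightarrow> a \<in> H"
    using normal.inv_op_closed1[OF assms g] normal.inv_op_closed2[OF assms g, of "inv g \<otimes> a \<otimes> g"]
    by metis
  thus "indicator H (inv g \<otimes> a \<otimes> g) = indicator H a" by (simp add: indicator_def)
qed

lemma ga_basis_mult_indicator:
  assumes H: "subgroup H G" and h: "h \<in> H"
  shows "ga_basis h \<star> indicator H = (indicator H :: 'a \<Rightarrow> 'f::field)"
proof
  fix a
  have "inv h \<otimes> a \<in> H \<longleftrightarrow> a \<in> H" if a: "a \<in> carrier G"
    using subgroup.m_closed[OF H subgroup.m_inv_closed[OF H h], of a]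
      subgroup.m_closed[OF H h, of "inv h \<otimes> a"] subgroup.mem_carrier[OF H h] a
    by auto
  thus "(ga_basis h \<star> indicator H) a = (indicator H a :: 'f)"
    using subgroup.mem_carrier[OF H] h
    by (cases "a \<in> carrier G") (auto simp: ga_mult_basis_left indicator_def)
qed

lemma Delta_mult_indicator:
  fixes f :: "'a \<Rightarrow> 'f::field"
  assumes H: "H \<lhd> G" and f: "f \<in> Delta G H"
  shows "f \<star> indicator H = (\<lambda>_. 0)"
proof -
  have sg: "subgroup H G" using H by (rule normal_imp_subgroup)
  have "(\<lambda>g. ga_basis h g - ga_basis \<one> g) \<star> indicator H = (\<lambda>_. 0 :: 'f)" if h: "h \<in> H" for h
    by (simp add: ga_mult_diff_left ga_basis_mult_indicator[OF sg] h subgroup.one_closed[OF sg])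
  hence "{(\<lambda>g. ga_basis h g - ga_basis \<one> g) | h. h \<in> H}
      \<subseteq> {f \<in> group_alg G. f \<star> indicator H = (\<lambda>_. 0 :: 'f)}"
    using subgroup.mem_carrier[OF sg] by (auto simp: group_alg_def ga_basis_def)
  hence "Delta G H \<subseteq> {f \<in> group_alg G. f \<star> indicator H = (\<lambda>_. 0 :: 'f)}"
    using ga_ideal_annihilator[OF class_function_indicator[OF H]] unfolding Delta_def by blast
  thus ?thesis using f by blast
qed

lemma class_function_basis_one: "class_function (ga_basis \<one>)"
  unfolding class_function_def ga_basis_def
proof (intro ballI)
  fix g a assume g: "g \<in> carrier G" and a: "a \<in> carrier G"
  have "inv g \<otimes> a \<otimes> g = \<one> \<longleftrightarrow> a = \<one>" by (rule conj_eq_one_iff[OF g a])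
  thus "(if inv g \<otimes> a \<otimes> g = \<one> then 1 else 0) = (if a = \<one> then 1 else 0)" by simp
qed

lemma ga_center_Delta_eq:
  assumes H: "H \<lhd> G" and card_H: "of_nat (card H) = (1::'f::field)"
  shows "ga_center G (Delta G H) = {z \<in> Delta G H. class_function (z :: 'a \<Rightarrow> 'f)}"
proof
  show "{z \<in> Delta G H. class_function (z :: 'a \<Rightarrow> 'f)} \<subseteq> ga_center G (Delta G H)"
    using class_function_commute by (auto simp: ga_center_def)
  have sg: "subgroup H G" using H by (rule normal_imp_subgroup)
  have HG: "H \<subseteq> carrier G" using sg by (rule subgroup.subset)
  define \<epsilon> :: "'a \<Rightarrow> 'f" where "\<epsilon> = (\<lambda>a. ga_basis \<one> a - indicator H a)"
  have "(\<Sum>a\<in>H. indicator H a) = (\<Sum>a\<in>H. 1 :: 'f)" by (rule sum.cong) auto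
  hence "sum \<epsilon> H = 0"
    using card_H finite_subset[OF HG finite_carrier] subgroup.one_closed[OF sg]
    by (simp add: \<epsilon>_def sum_subtractf ga_basis_def sum.delta)
  hence \<epsilon>_Delta: "\<epsilon> \<in> Delta G H"
    using subgroup.one_closed[OF sg]
    by (intro Delta_if_supported[OF sg]) (auto simp: \<epsilon>_def ga_basis_def)
  have "class_function (ga_basis \<one> :: 'a \<Rightarrow> 'f)" "class_function (indicator H :: 'a \<Rightarrow> 'f)"
    by (rule class_function_basis_one, rule class_function_indicator[OF H])
  hence \<epsilon>_central: "\<epsilon> \<star> r = r \<star> \<epsilon>" for r
    by (intro class_function_commute) (simp add: class_function_def \<epsilon>_def)
  show "ga_center G (Delta G H) \<subseteq> {z \<in> Delta G H. class_function (z :: 'a \<Rightarrow> 'f)}"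
  proof
    fix z :: "'a \<Rightarrow> 'f" assume "z \<in> ga_center G (Delta G H)"
    hence z: "z \<in> Delta G H" and comm: "\<And>r. r \<in> Delta G H \<Longrightarrow> z \<star> r = r \<star> z"
      by (auto simp: ga_center_def)
    have "z \<in> group_alg G" using z ga_ideal_Delta[OF HG] by (auto simp: ga_ideal_def)
    hence z_\<epsilon>: "z \<star> \<epsilon> = z"
      by (simp add: \<epsilon>_def ga_mult_diff_right ga_mult_one_right Delta_mult_indicator[OF H z])
    have "z \<star> ga_basis c = ga_basis c \<star> z" if c: "c \<in> carrier G" for c
    proof -
      have "ga_basis c \<star> \<epsilon> \<in> Delta G H"
        using ga_ideal_Delta[OF HG] \<epsilon>_Delta ga_basis_in_group_alg[OF c] by (rule ga_ideal_mult_left)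
      have "z \<star> ga_basis c = z \<star> \<epsilon> \<star> ga_basis c" by (simp add: z_\<epsilon>)
      also have "\<dots> = z \<star> (ga_basis c \<star> \<epsilon>)" by (simp add: ga_mult_assoc \<epsilon>_central)
      also have "\<dots> = ga_basis c \<star> \<epsilon> \<star> z" by (rule comm) fact
      also have "\<dots> = ga_basis c \<star> (z \<star> \<epsilon>)" by (simp add: ga_mult_assoc \<epsilon>_central)
      also have "\<dots> = ga_basis c \<star> z" by (simp add: z_\<epsilon>)
      finally show ?thesis .
    qed
    thus "z \<in> {z \<in> Delta G H. class_function z}"
      using z class_function_if_commute_basis by blast
  qed
qed

end

section \<open>The metacyclic group T of order 3m\<close>

lemma (in group) conj_int_pow:
  assumes g: "g \<in> carrier G" and a: "a \<in> carrier G"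
  shows "inv g \<otimes> a [^] (i::int) \<otimes> g = (inv g \<otimes> a \<otimes> g) [^] i"
proof -
  have "(\<lambda>h. inv g \<otimes> h \<otimes> g) \<in> hom G G"
    using g by (auto simp: hom_def m_assoc)
  from hom_int_pow[OF this a is_group is_group] show ?thesis .
qed

locale T3m_group = group G for G (structure) +
  fixes x y :: 'a and m :: nat and t :: int
  assumes x_closed [simp]: "x \<in> carrier G" and y_closed [simp]: "y \<in> carrier G"
    and generate_xy: "generate G {x, y} = carrier G"
    and x_pow_m: "x [^] m = \<one>"
    and y_pow_3: "y [^] (3::nat) = \<one>"
    and conj_y_x: "inv y \<otimes> x \<otimes> y = x [^] t"
    and order_G: "order G = 3 * m"
    and t_cube: "t ^ 3 mod int m = 1 mod int m"
    and t_gcd: "gcd (int m) (t - 1) = 1"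
    and m_pos: "0 < m"
begin

abbreviation H :: "'a set" where
  "H \<equiv> generate G {x}"

definition yconj :: "'a \<Rightarrow> 'a" where
  "yconj h = inv y \<otimes> h \<otimes> y"

lemma mem_H: "h \<in> H \<longleftrightarrow> (\<exists>i::int. h = x [^] i)"
  using generate_pow[OF x_closed] by auto

lemma conj_y_pow_x_pow: "inv (y [^] (j::nat)) \<otimes> x [^] (i::int) \<otimes> y [^] j = x [^] (t ^ j * i)"
proof (induction j)
  case (Suc j)
  have "inv (y [^] Suc j) \<otimes> x [^] i \<otimes> y [^] Suc j
      = inv y \<otimes> (inv (y [^] j) \<otimes> x [^] i \<otimes> y [^] j) \<otimes> y"
    by (simp add: inv_mult_group m_assoc)
  also have "\<dots> = x [^] (t * (t ^ j * i))"
    by (simp add: Suc conj_int_pow conj_y_x int_pow_pow)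
  finally show ?case by (simp add: mult.assoc)
qed simp

lemma x_pow_mult_y_pow: "x [^] (i::int) \<otimes> y [^] (j::nat) = y [^] j \<otimes> x [^] (t ^ j * i)"
  by (simp add: conj_y_pow_x_pow[symmetric] m_assoc[symmetric])

lemma y_pow_mod: "y [^] (n::nat) = y [^] (n mod 3)"
proof -
  have "y [^] n = (y [^] (3::nat)) [^] (n div 3) \<otimes> y [^] (n mod 3)"
    by (simp add: nat_pow_mult nat_pow_pow)
  thus ?thesis by (simp add: y_pow_3)
qed

lemma normal_form:
  assumes "g \<in> carrier G"
  shows "\<exists>j<3. \<exists>i::int. g = y [^] (j::nat) \<otimes> x [^] i"
proof -
  have lt3: "(0::nat) < 3" "(1::nat) < 3" "(2::nat) < 3" by simp_all
  from assms have "g \<in> generate G {x, y}" by (simp add: generate_xy)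
  thus ?thesis
  proof (induction rule: generate.induct)
    case one
    have "\<one> = y [^] (0::nat) \<otimes> x [^] (0::int)" by simp
    thus ?case using lt3 by blast
  next
    case (incl h)
    hence "h = y [^] (0::nat) \<otimes> x [^] (1::int) \<or> h = y [^] (1::nat) \<otimes> x [^] (0::int)" by auto
    thus ?case using lt3 by blast
  next
    case (inv h)
    have "y [^] (2::nat) \<otimes> y = \<one>"
      using y_pow_3 by (simp add: numeral_3_eq_3 numeral_2_eq_2)
    hence "inv y = y [^] (2::nat) \<otimes> x [^] (0::int)" by (simp add: inv_equality)
    moreover have "inv x = y [^] (0::nat) \<otimes> x [^] (-1::int)" by (simp add: int_pow_neg)
    ultimately have "inv h = y [^] (0::nat) \<otimes> x [^] (-1::int) \<or> inv h = y [^] (2::nat) \<otimes> x [^] (0::int)"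
      using inv by auto
    thus ?case using lt3 by blast
  next
    case (eng h1 h2)
    then obtain i a j b where
      h1: "h1 = y [^] (i::nat) \<otimes> x [^] (a::int)" and h2: "h2 = y [^] (j::nat) \<otimes> x [^] (b::int)"
      by blast
    have "h1 \<otimes> h2 = y [^] i \<otimes> (x [^] a \<otimes> y [^] j) \<otimes> x [^] b"
      by (simp add: h1 h2 m_assoc)
    also have "\<dots> = y [^] i \<otimes> y [^] j \<otimes> (x [^] (t ^ j * a) \<otimes> x [^] b)"
      by (simp only: x_pow_mult_y_pow) (simp add: m_assoc)
    also have "\<dots> = y [^] (i + j) \<otimes> x [^] (t ^ j * a + b)"
      by (simp add: nat_pow_mult int_pow_mult)
    also have "y [^] (i + j) = y [^] ((i + j) mod 3)"
      by (rule y_pow_mod)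
    finally show ?case by (metis mod_less_divisor zero_less_numeral)
  qed
qed

sublocale finite_group G
proof
  show "finite (carrier G)"
    using order_G m_pos unfolding order_def by (metis card.infinite mult_is_0 neq0_conv zero_neq_numeral)
qed

lemma H_subset: "H \<subseteq> carrier G"
  by (simp add: generate_incl)

lemma ord_x: "ord x = m"
proof -
  have finH: "finite H" using finite_subset[OF H_subset finite_carrier] .
  have "carrier G \<subseteq> (\<lambda>(j, h). y [^] j \<otimes> h) ` ({..<3::nat} \<times> H)"
  proof
    fix g assume "g \<in> carrier G"
    then obtain j i where "j < 3" "g = y [^] (j::nat) \<otimes> x [^] (i::int)" using normal_form by blast
    moreover have "x [^] i \<in> H" using mem_H by blast
    ultimately show "g \<in> (\<lambda>(j, h). y [^] j \<otimes> h) ` ({..<3::nat} \<times> H)" by force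
  qed
  hence "card (carrier G) \<le> card ((\<lambda>(j, h). y [^] j \<otimes> h) ` ({..<3::nat} \<times> H))"
    using finH by (intro card_mono) auto
  also have "\<dots> \<le> card ({..<3::nat} \<times> H)"
    by (rule card_image_le) (simp add: finH)
  also have "\<dots> = 3 * ord x"
    by (simp add: card_cartesian_product generate_pow_card)
  finally have "m \<le> ord x" using order_G by (simp add: order_def)
  moreover have "ord x dvd m" using x_pow_m by (simp add: pow_eq_id)
  ultimately show ?thesis using m_pos by (simp add: dvd_imp_le le_antisym)
qed

lemma card_H: "card H = m"
  using generate_pow_card[OF x_closed] ord_x by simp

lemma x_pow_eq_iff: "x [^] (i::int) = x [^] (j::int) \<longleftrightarrow> int m dvd j - i"
  by (simp add: int_pow_eq ord_x)

lemma yconj_x_pow: "yconj (x [^] (i::int)) = x [^] (t * i)"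
  using conj_y_pow_x_pow[of 1 i] by (simp add: yconj_def)

lemma yconj_cube: "h \<in> H \<Longrightarrow> yconj (yconj (yconj h)) = h"
proof -
  assume "h \<in> H"
  then obtain i where h: "h = x [^] (i::int)" using mem_H by blast
  have "int m dvd t ^ 3 - 1" using t_cube by (simp add: mod_eq_dvd_iff)
  hence "int m dvd - ((t ^ 3 - 1) * i)" by simp
  also have "- ((t ^ 3 - 1) * i) = i - t * (t * (t * i))" by (simp add: power3_eq_cube algebra_simps)
  finally show ?thesis by (simp add: h yconj_x_pow x_pow_eq_iff)
qed

lemma yconj_neq: "h \<in> H \<Longrightarrow> h \<noteq> \<one> \<Longrightarrow> yconj h \<noteq> h"
proof
  assume "h \<in> H" "h \<noteq> \<one>" "yconj h = h"
  then obtain i where h: "h = x [^] (i::int)" using mem_H by blast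
  have "int m dvd i - t * i"
    using \<open>yconj h = h\<close> by (simp add: h yconj_x_pow x_pow_eq_iff)
  also have "i - t * i = - ((t - 1) * i)" by (simp add: algebra_simps)
  finally have "int m dvd (t - 1) * i" by simp
  moreover have "coprime (int m) (t - 1)" using t_gcd by (simp add: coprime_iff_gcd_eq_1)
  ultimately have "int m dvd i - 0" by (simp add: coprime_dvd_mult_right_iff)
  hence "x [^] (0::int) = h" unfolding h x_pow_eq_iff .
  thus False using \<open>h \<noteq> \<one>\<close> by simp
qed

lemma yconj_H: "h \<in> H \<Longrightarrow> yconj h \<in> H"
  by (auto simp: mem_H yconj_x_pow)

lemma yconj_closed: "h \<in> H - {\<one>} \<Longrightarrow> yconj h \<in> H - {\<one>}"
proof -
  assume h: "h \<in> H - {\<one>}"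
  hence "yconj h \<in> H" by (simp add: yconj_H)
  moreover have "yconj h \<noteq> \<one>"
    using h H_subset conj_eq_one_iff[OF y_closed] by (auto simp: yconj_def)
  ultimately show ?thesis by simp
qed

lemma conj_mem_yconj_orbit:
  assumes g: "g \<in> carrier G" and h: "h \<in> H"
  shows "inv g \<otimes> h \<otimes> g \<in> {h, yconj h, yconj (yconj h)}"
proof -
  obtain j d where j: "j < 3" and g_eq: "g = y [^] (j::nat) \<otimes> x [^] (d::int)"
    using normal_form[OF g] by blast
  obtain i where h_eq: "h = x [^] (i::int)" using h mem_H by blast
  have "inv g \<otimes> h \<otimes> g = inv (x [^] d) \<otimes> (inv (y [^] j) \<otimes> x [^] i \<otimes> y [^] j) \<otimes> x [^] d"
    by (simp add: g_eq h_eq inv_mult_group m_assoc)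
  also have "\<dots> = x [^] (- d + t ^ j * i + d)"
    by (simp add: conj_y_pow_x_pow int_pow_neg[symmetric] int_pow_mult[symmetric])
  finally have "inv g \<otimes> h \<otimes> g = x [^] (t ^ j * i)" by simp
  moreover have "j = 0 \<or> j = 1 \<or> j = 2" using j by auto
  ultimately show ?thesis
    by (auto simp: h_eq yconj_x_pow power2_eq_square mult.assoc)
qed

lemma H_normal: "H \<lhd> G"
  unfolding normal_inv_iff
proof (intro conjI ballI)
  show "subgroup H G" by (simp add: generate_is_subgroup)
  fix g h assume g: "g \<in> carrier G" and h: "h \<in> H"
  have "inv (inv g) \<otimes> h \<otimes> inv g \<in> {h, yconj h, yconj (yconj h)}"
    using g h by (intro conj_mem_yconj_orbit) auto
  thus "g \<otimes> h \<otimes> inv g \<in> H" using g h yconj_H by auto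
qed

lemma coprime_one_minus_t_pow:
  assumes "j = 1 \<or> j = 2"
  shows "coprime (1 - t ^ j) (int m)"
proof -
  have coprime_t: "coprime (t - 1) (int m)"
    using t_gcd by (simp add: coprime_iff_gcd_eq_1 gcd.commute)
  have "(t - t ^ 3) mod int m = (t - 1) mod int m"
    using t_cube by (intro mod_diff_cong) simp_all
  hence "coprime (t - t ^ 3) (int m)"
    using coprime_t m_pos coprime_mod_left_iff[of "int m"] by (metis of_nat_0_less_iff less_irrefl)
  moreover have "t - t ^ 3 = t * (1 - t ^ 2)"
    by (simp add: power2_eq_square power3_eq_cube algebra_simps)
  moreover have "coprime (1 - t) (int m)"
    using coprime_t coprime_minus_left_iff[of "t - 1" "int m"] by simp
  ultimately show ?thesis using assms by auto
qed

lemma coset_in_conj_class: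
  assumes g: "g \<in> carrier G" "g \<notin> H" and h: "h \<in> H"
  shows "\<exists>c\<in>carrier G. inv c \<otimes> g \<otimes> c = g \<otimes> h"
proof -
  obtain j d where j: "j < 3" and g_eq: "g = y [^] (j::nat) \<otimes> x [^] (d::int)"
    using normal_form[OF g(1)] by blast
  have "j \<noteq> 0"
  proof
    assume "j = 0"
    hence "g = x [^] d" by (simp add: g_eq)
    thus False using g(2) mem_H by blast
  qed
  with j have "j = 1 \<or> j = 2" by auto
  then obtain u v where bezout: "u * (1 - t ^ j) + v * int m = 1"
    using bezout_int[of "1 - t ^ j" "int m"] coprime_one_minus_t_pow
    by (auto simp: coprime_iff_gcd_eq_1)
  obtain e where h_eq: "h = x [^] (e::int)" using h mem_H by blast
  \<comment> \<open>conjugation by x^f multiplies y^j x^d by x^((1 - t^j) f); solve (1 - t^j) f = e mod m\<close>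
  define f where "f = e * u"
  have "inv (x [^] f) \<otimes> g \<otimes> x [^] f = x [^] (- f) \<otimes> y [^] j \<otimes> (x [^] d \<otimes> x [^] f)"
    by (simp add: g_eq int_pow_neg m_assoc)
  also have "\<dots> = y [^] j \<otimes> x [^] (t ^ j * (- f) + (d + f))"
    by (simp only: x_pow_mult_y_pow int_pow_mult[OF x_closed]) (simp add: m_assoc)
  also have "x [^] (t ^ j * (- f) + (d + f)) = x [^] (d + e)"
  proof -
    have "d + e - (t ^ j * (- f) + (d + f)) = e * (1 - u * (1 - t ^ j))"
      by (simp add: f_def algebra_simps)
    also have "1 - u * (1 - t ^ j) = v * int m"
      using bezout by (metis add_diff_cancel_left')
    finally have "d + e - (t ^ j * (- f) + (d + f)) = e * (v * int m)" .
    thus ?thesis by (simp add: x_pow_eq_iff)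
  qed
  also have "y [^] j \<otimes> x [^] (d + e) = g \<otimes> h"
    by (simp add: g_eq h_eq int_pow_mult m_assoc)
  finally show ?thesis by (intro bexI[of _ "x [^] f"]) auto
qed

sublocale fixpoint_free_order3 "H - {\<one>}" yconj
proof
  show "finite (H - {\<one>})" using finite_subset[OF H_subset finite_carrier] by simp
  fix p assume p: "p \<in> H - {\<one>}"
  thus "yconj p \<in> H - {\<one>}" by (rule yconj_closed)
  show "yconj (yconj (yconj p)) = p" using p yconj_cube by blast
  show "yconj p \<noteq> p" using p yconj_neq by blast
qed

lemma card_orbits: "m = 3 * card orbits + 1"
proof -
  have "\<one> \<in> H" by (simp add: generate.one)
  hence "card (H - {\<one>}) = m - 1"
    using finite_subset[OF H_subset finite_carrier] card_H by simp
  thus ?thesis using card_P_eq m_pos by simp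
qed

end

section \<open>The centre of \<open>\<Delta>(G,H)\<close> for the group T\<close>

context T3m_group
begin

lemma of_nat_m_eq_1: "(3::'f::field) = 0 \<Longrightarrow> of_nat m = (1::'f)"
  by (subst card_orbits) simp

lemma ga_center_Delta_H_eq:
  assumes "(3::'f::field) = 0"
  shows "ga_center G (Delta G H) = {z \<in> Delta G H. class_function (z :: 'a \<Rightarrow> 'f)}"
  using ga_center_Delta_eq[OF H_normal] of_nat_m_eq_1[OF assms] card_H by simp

lemma class_function_yconj: "class_function f \<Longrightarrow> h \<in> carrier G \<Longrightarrow> f (yconj h) = f h"
  by (simp add: class_function_def yconj_def)

lemma Delta_class_function_vanishes_off_H:
  fixes z :: "'a \<Rightarrow> 'f::field"
  assumes three: "(3::'f) = 0" and z: "z \<in> Delta G H" and cf: "class_function z" and a: "a \<notin> H"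
  shows "z a = 0"
proof (cases "a \<in> carrier G")
  case False
  thus ?thesis using z ga_ideal_Delta[OF H_subset] by (auto simp: ga_ideal_def group_alg_def)
next
  case True
  have "0 = (z \<star> indicator H) a" using Delta_mult_indicator[OF H_normal z] by simp
  also have "\<dots> = (\<Sum>h\<in>H. z (a \<otimes> h))"
    by (rule ga_mult_indicator_apply[OF normal_imp_subgroup[OF H_normal] True])
  also have "\<dots> = (\<Sum>h\<in>H. z a)"
  proof (rule sum.cong[OF refl])
    fix h assume "h \<in> H"
    then obtain c where "c \<in> carrier G" "inv c \<otimes> a \<otimes> c = a \<otimes> h"
      using coset_in_conj_class True a by blast
    thus "z (a \<otimes> h) = z a" using cf True unfolding class_function_def by metis
  qed
  also have "\<dots> = z a" using card_H of_nat_m_eq_1[OF three] by simp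
  finally show ?thesis by simp
qed

lemma Delta_class_function_vanishes_at_one:
  fixes z :: "'a \<Rightarrow> 'f::field"
  assumes three: "(3::'f) = 0" and z: "z \<in> Delta G H" and cf: "class_function z"
  shows "z \<one> = 0"
proof -
  have "0 = (z \<star> indicator H) \<one>" using Delta_mult_indicator[OF H_normal z] by simp
  also have "\<dots> = (\<Sum>h\<in>H. z (\<one> \<otimes> h))"
    by (rule ga_mult_indicator_apply[OF normal_imp_subgroup[OF H_normal] one_closed])
  also have "\<dots> = sum z H"
    using H_subset by (intro sum.cong) auto
  also have "\<dots> = z \<one> + sum z (H - {\<one>})"
    using finite_subset[OF H_subset finite_carrier] by (simp add: sum.remove generate.one)
  also have "sum z (H - {\<one>}) = 0"
    using three class_function_yconj[OF cf] H_subset by (intro sum_invariant_eq_0) auto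
  finally show ?thesis by simp
qed

lemma class_function_indicator_orbit:
  assumes Q: "Q \<in> orbits"
  shows "class_function (indicator Q)"
  unfolding class_function_def
proof (intro ballI)
  fix g a assume g: "g \<in> carrier G" and a: "a \<in> carrier G"
  obtain p where p: "p \<in> H - {\<one>}" and Q_eq: "Q = orbit p" using Q by blast
  have conj_in: "inv c \<otimes> b \<otimes> c \<in> Q" if c: "c \<in> carrier G" and b: "b \<in> Q" for b c
  proof -
    have "b \<in> H - {\<one>}" using b orbit_subset[OF p] Q_eq by blast
    hence "inv c \<otimes> b \<otimes> c \<in> orbit b"
      using conj_mem_yconj_orbit[OF c] by (simp add: orbit_def)
    also have "orbit b = Q" using orbit_eq[OF p] b Q_eq by blast
    finally show ?thesis .
  qed
  have "inv g \<otimes> a \<otimes> g \<in> Q \<longleftrightarrow> a \<in> Q"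
  proof
    assume "inv g \<otimes> a \<otimes> g \<in> Q"
    from conj_in[OF inv_closed[OF g] this] show "a \<in> Q" using g a by (simp add: m_assoc)
  qed (use conj_in g in blast)
  thus "indicator Q (inv g \<otimes> a \<otimes> g) = indicator Q a" by (simp add: indicator_def)
qed

lemma indicator_orbit_in_center:
  assumes three: "(3::'f::field) = 0" and Q: "Q \<in> orbits"
  shows "(indicator Q :: 'a \<Rightarrow> 'f) \<in> ga_center G (Delta G H)"
proof -
  obtain p where p: "p \<in> H - {\<one>}" and Q_eq: "Q = orbit p" using Q by blast
  have QH: "Q \<subseteq> H" using orbit_subset[OF p] Q_eq by blast
  have "sum (indicator Q) H = (sum (indicator Q) Q :: 'f)"
    using QH finite_subset[OF H_subset finite_carrier] by (intro sum.mono_neutral_right) auto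
  also have "\<dots> = of_nat (card Q)" by simp
  also have "\<dots> = 0" using card_orbit[OF p] Q_eq three by simp
  finally have "(indicator Q :: 'a \<Rightarrow> 'f) \<in> Delta G H"
    using QH by (intro Delta_if_supported[OF normal_imp_subgroup[OF H_normal]]) (auto simp: indicator_def)
  thus ?thesis
    using class_function_indicator_orbit[OF Q] ga_center_Delta_H_eq[OF three] by simp
qed

lemma fdim_center_Delta:
  assumes three: "(3::'f::field) = 0"
  shows "fdim (ga_center G (Delta G H) :: ('a \<Rightarrow> 'f) set) = card orbits"
  unfolding fdim_def
proof (rule fun_vs.dim_unique)
  show "(indicator ` orbits :: ('a \<Rightarrow> 'f) set) \<subseteq> ga_center G (Delta G H)"
    using indicator_orbit_in_center[OF three] by blast
  show "ga_center G (Delta G H) \<subseteq> fun_vs.span (indicator ` orbits :: ('a \<Rightarrow> 'f) set)"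
  proof
    fix z :: "'a \<Rightarrow> 'f" assume "z \<in> ga_center G (Delta G H)"
    hence z: "z \<in> Delta G H" and cf: "class_function z" using ga_center_Delta_H_eq[OF three] by auto
    show "z \<in> fun_vs.span (indicator ` orbits)"
    proof (rule in_span_indicators[OF finite_imageI[OF finite_P] disjoint_orbits])
      fix a assume "a \<notin> \<Union> orbits"
      hence "a \<notin> H \<or> a = \<one>" using Union_orbits by blast
      thus "z a = 0"
        using Delta_class_function_vanishes_off_H[OF three z cf]
          Delta_class_function_vanishes_at_one[OF three z cf] by blast
    next
      fix Q a b assume "Q \<in> orbits" and ab: "a \<in> Q" "b \<in> Q"
      then obtain p where p: "p \<in> H - {\<one>}" and Q_eq: "Q = orbit p" by blast
      have "z q = z p" if "q \<in> orbit p" for q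
        using class_function_yconj[OF cf] H_subset
        by (intro invariant_const_on_orbit[where f = z, OF _ p that]) auto
      thus "z a = z b" using ab Q_eq by simp
    qed
  qed
  show "fun_vs.independent (indicator ` orbits :: ('a \<Rightarrow> 'f) set)"
    using mem_orbit_self by (intro independent_indicators[OF finite_imageI[OF finite_P] disjoint_orbits]) blast
  show "card (indicator ` orbits :: ('a \<Rightarrow> 'f) set) = card orbits"
    by (rule card_image[OF inj_on_subset[OF inj_indicator subset_UNIV]])
qed

end

theorem corollary3p13:
  fixes G :: "('g, 'b) monoid_scheme" and x y :: 'g and k :: nat and m :: nat and t :: int
  assumes F_finite: "finite (UNIV :: 'f::field set)"
    and F_char: "CHAR('f) = 3"
    and m_def: "m = 3 * k + 1"
    and t_cube: "t ^ 3 mod int m = 1 mod int m"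
    and t_gcd: "gcd (int m) (t - 1) = 1"
    and grp: "group G"
    and xy: "x \<in> carrier G" "y \<in> carrier G"
    and gen: "generate G {x, y} = carrier G"
    and rel_x: "x [^]\<^bsub>G\<^esub> m = \<one>\<^bsub>G\<^esub>"
    and rel_y: "y [^]\<^bsub>G\<^esub> (3::nat) = \<one>\<^bsub>G\<^esub>"
    and rel_conj: "inv\<^bsub>G\<^esub> y \<otimes>\<^bsub>G\<^esub> x \<otimes>\<^bsub>G\<^esub> y = x [^]\<^bsub>G\<^esub> t"
    and ord: "order G = 3 * m"
  shows "fdim (ga_center G (Delta G (generate G {x})) :: ('g \<Rightarrow> 'f) set) = k"
proof -
  interpret T3m_group G x y m t
    unfolding T3m_group_def T3m_group_axioms_def
    using grp xy gen rel_x rel_y rel_conj ord t_cube t_gcd m_def by simp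
  have "(3::'f) = 0" using of_nat_CHAR[where 'a = 'f] F_char by simp
  moreover have "card orbits = k" using card_orbits m_def by simp
  ultimately show ?thesis by (simp add: fdim_center_Delta)
qed

end
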